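(* Let $\alpha\in(0,1/2)$. There exist constants $c,C>0$ depending only on $\alpha$ such that for every irreducible discrete-time Markov chain on a finite state space, \[ c\, t_{\mathrm{mov}}(\alpha)\le t_{\mathrm{mix}}\le C\, t_{\mathrm{mov}}(\alpha). \]
   Context: Let $(X_t)_{t\ge0}$ be an irreducible discrete-time Markov chain on a finite state space $\Omega$ with transition matrix $P$ and stationary distribution $\pi$; write $P^t(x,y)=\mathbb{P}_x(X_t=y)$. Let $d(t)=\max_x\|P^t(x,\cdot)-\pi\|$, where $\|\mu-\nu\|$ is the total variation distance, and $t_{\mathrm{mix}}(\epsilon)=\min\{t\ge0: d(t)\le\epsilon\}$, $t_{\mathrm{mix}}=t_{\mathrm{mix}}(1/4)$. For $\alpha\in(0,1)$ let $\mathcal{A}(\alpha)$ be the set of sequences $A=(A_t)_{t\ge0}$ of subsets of $\Omega$ with $\pi(A_t)\ge\alpha$ for all $t$; for such $A$ let $\tau_A=\inf\{t\ge0: X_t\in A_t\}$, and define $t_{\mathrm{mov}}(\alpha)=\sup_{x\in\Omega,\,A\in\mathcal{A}(\alpha)}\mathbb{E}_x[\tau_A]$. *)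

theory Defs
  imports "HOL-Analysis.Analysis"
begin

text \<open>A finite state space is modelled as a finite nonempty set S of naturals
(every finite set is in bijection with one); the transition matrix is
P :: nat => nat => real, only its entries on S x S matter.\<close>

definition stochastic :: "nat set \<Rightarrow> (nat \<Rightarrow> nat \<Rightarrow> real) \<Rightarrow> bool" where
  "stochastic S P \<longleftrightarrow> (\<forall>x\<in>S. \<forall>y\<in>S. P x y \<ge> 0) \<and> (\<forall>x\<in>S. (\<Sum>y\<in>S. P x y) = 1)"

fun mpow :: "nat set \<Rightarrow> (nat \<Rightarrow> nat \<Rightarrow> real) \<Rightarrow> nat \<Rightarrow> nat \<Rightarrow> nat \<Rightarrow> real" where
  "mpow S P 0 x y = (if x = y then 1 else 0)"
| "mpow S P (Suc n) x y = (\<Sum>z\<in>S. mpow S P n x z * P z y)"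

definition irreducible_chain :: "nat set \<Rightarrow> (nat \<Rightarrow> nat \<Rightarrow> real) \<Rightarrow> bool" where
  "irreducible_chain S P \<longleftrightarrow> (\<forall>x\<in>S. \<forall>y\<in>S. \<exists>n. mpow S P n x y > 0)"

definition stationary :: "nat set \<Rightarrow> (nat \<Rightarrow> nat \<Rightarrow> real) \<Rightarrow> (nat \<Rightarrow> real) \<Rightarrow> bool" where
  "stationary S P \<pi> \<longleftrightarrow> (\<forall>y\<in>S. \<pi> y \<ge> 0) \<and> sum \<pi> S = 1 \<and>
     (\<forall>y\<in>S. (\<Sum>x\<in>S. \<pi> x * P x y) = \<pi> y)"

definition tv :: "nat set \<Rightarrow> (nat \<Rightarrow> real) \<Rightarrow> (nat \<Rightarrow> real) \<Rightarrow> real" where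
  "tv S \<mu> \<nu> = (1/2) * (\<Sum>y\<in>S. \<bar>\<mu> y - \<nu> y\<bar>)"

definition dmix :: "nat set \<Rightarrow> (nat \<Rightarrow> nat \<Rightarrow> real) \<Rightarrow> (nat \<Rightarrow> real) \<Rightarrow> nat \<Rightarrow> real" where
  "dmix S P \<pi> t = Max ((\<lambda>x. tv S (mpow S P t x) \<pi>) ` S)"

definition tmix :: "nat set \<Rightarrow> (nat \<Rightarrow> nat \<Rightarrow> real) \<Rightarrow> (nat \<Rightarrow> real) \<Rightarrow> real \<Rightarrow> ennreal" where
  "tmix S P \<pi> \<epsilon> = (if \<exists>t. dmix S P \<pi> t \<le> \<epsilon>
      then of_nat (LEAST t. dmix S P \<pi> t \<le> \<epsilon>) else \<infinity>)"

text \<open>survive S P A x t y = P_x(X_t = y and X_s \<notin> A_s for all s \<le> t)\<close>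
fun survive :: "nat set \<Rightarrow> (nat \<Rightarrow> nat \<Rightarrow> real) \<Rightarrow> (nat \<Rightarrow> nat set) \<Rightarrow> nat \<Rightarrow> nat \<Rightarrow> nat \<Rightarrow> real" where
  "survive S P A x 0 y = (if y = x \<and> y \<notin> A 0 then 1 else 0)"
| "survive S P A x (Suc t) y =
     (if y \<in> A (Suc t) then 0 else (\<Sum>z\<in>S. survive S P A x t z * P z y))"

text \<open>E_x[tau_A] = sum over t of P_x(tau_A > t), in [0, infinity]\<close>
definition exp_hit :: "nat set \<Rightarrow> (nat \<Rightarrow> nat \<Rightarrow> real) \<Rightarrow> (nat \<Rightarrow> nat set) \<Rightarrow> nat \<Rightarrow> ennreal" where
  "exp_hit S P A x = (\<Sum>t. ennreal (\<Sum>y\<in>S. survive S P A x t y))"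

definition targets :: "nat set \<Rightarrow> (nat \<Rightarrow> real) \<Rightarrow> real \<Rightarrow> (nat \<Rightarrow> nat set) set" where
  "targets S \<pi> \<alpha> = {A. \<forall>t. A t \<subseteq> S \<and> sum \<pi> (A t) \<ge> \<alpha>}"

definition tmov :: "nat set \<Rightarrow> (nat \<Rightarrow> nat \<Rightarrow> real) \<Rightarrow> (nat \<Rightarrow> real) \<Rightarrow> real \<Rightarrow> ennreal" where
  "tmov S P \<pi> \<alpha> = (SUP x\<in>S. SUP A\<in>targets S \<pi> \<alpha>. exp_hit S P A x)"

end

theory Submission
  imports Defs
begin

text \<open>
Everything is phrased through the oscillation (max minus min over the state
space) of functions f: d(t) is at most the largest oscillation of P^t f over
0-1 valued f.

If d(t) \<le> 1/4, any two rows of P^t are within total variation 1/2, so P^t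
halves oscillations and P^{jt} shrinks them by 2^{-j}. Then from every state a
target of stationary mass \<alpha> is hit within jt steps with probability at least
\<alpha>/2, and the hitting time is dominated by a geometric number of blocks of
length jt.

Conversely, suppose every moving target of mass \<alpha> is hit in expected time at
most T, and fix m of order T. For a function h consider the space-time
harmonic function g r = P^{m-r} h. Its superlevel sets at level
\<mu> - \<alpha>/(1-\<alpha>) (max h - \<mu>), \<mu> the stationary mean, have mass at least \<alpha>
(a reverse Markov inequality), so they form a moving target; by Markov's
inequality it is missed during the whole window with probability at most p,
and optional stopping bounds P^m h from below. Together with the same bound
for -h, this contracts oscillations by \<alpha>/(1-\<alpha>) + 2p < 1 per window of length m.
\<close>

lemma sum_product_assoc:
  fixes f :: "'a \<Rightarrow> 'c::comm_semiring_1"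
  shows "(\<Sum>y\<in>J. (\<Sum>x\<in>I. f x * g x y) * h y) = (\<Sum>x\<in>I. f x * (\<Sum>y\<in>J. g x y * h y))"
proof -
  have "(\<Sum>y\<in>J. (\<Sum>x\<in>I. f x * g x y) * h y) = (\<Sum>y\<in>J. \<Sum>x\<in>I. f x * g x y * h y)"
    by (simp add: sum_distrib_right)
  also have "\<dots> = (\<Sum>x\<in>I. \<Sum>y\<in>J. f x * g x y * h y)"
    by (rule sum.swap)
  finally show ?thesis
    by (simp add: sum_distrib_left mult.assoc)
qed

lemma sum_mult_indicator_subset:
  fixes f :: "'a \<Rightarrow> 'b::semiring_1"
  assumes "finite A" "B \<subseteq> A"
  shows "(\<Sum>x\<in>A. f x * indicator B x) = sum f B"
  using assms by (intro sum.mono_neutral_cong_right) (auto simp: indicator_def)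

lemma tmix_le_of_nat: "dmix S P \<pi> t \<le> \<epsilon> \<Longrightarrow> tmix S P \<pi> \<epsilon> \<le> of_nat t"
  unfolding tmix_def by (auto intro: Least_le)

locale finite_markov_chain =
  fixes S :: "nat set" and P :: "nat \<Rightarrow> nat \<Rightarrow> real" and \<pi> :: "nat \<Rightarrow> real"
  assumes finite_S: "finite S" and S_nonempty: "S \<noteq> {}"
    and stochastic: "stochastic S P" and stationary: "stationary S P \<pi>"
begin

lemma P_nonneg: "x \<in> S \<Longrightarrow> y \<in> S \<Longrightarrow> P x y \<ge> 0"
  using stochastic by (auto simp: stochastic_def)

lemma P_row_sum: "x \<in> S \<Longrightarrow> (\<Sum>y\<in>S. P x y) = 1"
  using stochastic by (auto simp: stochastic_def)

lemma pi_nonneg: "y \<in> S \<Longrightarrow> \<pi> y \<ge> 0"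
  using stationary by (auto simp: stationary_def)

lemma pi_sum: "sum \<pi> S = 1"
  using stationary by (auto simp: stationary_def)

lemma pi_P: "y \<in> S \<Longrightarrow> (\<Sum>x\<in>S. \<pi> x * P x y) = \<pi> y"
  using stationary by (auto simp: stationary_def)

subsection \<open>Transition powers and the Markov operator\<close>

lemma mpow_nonneg: "y \<in> S \<Longrightarrow> mpow S P n x y \<ge> 0"
  by (induction n arbitrary: y) (auto intro!: sum_nonneg mult_nonneg_nonneg P_nonneg)

lemma mpow_row_sum: "x \<in> S \<Longrightarrow> (\<Sum>y\<in>S. mpow S P n x y) = 1"
proof (induction n)
  case 0
  then show ?case using finite_S by simp
next
  case (Suc n)
  have "(\<Sum>y\<in>S. mpow S P (Suc n) x y) = (\<Sum>z\<in>S. mpow S P n x z * (\<Sum>y\<in>S. P z y))"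
    unfolding mpow.simps sum_distrib_left by (rule sum.swap)
  also have "\<dots> = (\<Sum>z\<in>S. mpow S P n x z)"
    by (simp add: P_row_sum)
  finally show ?case
    using Suc by simp
qed

lemma mpow_add: "y \<in> S \<Longrightarrow> mpow S P (a + b) x y = (\<Sum>w\<in>S. mpow S P a x w * mpow S P b w y)"
proof (induction b arbitrary: y)
  case 0
  then show ?case
    using finite_S by (simp add: if_distrib[of "\<lambda>c. _ * c"] cong: if_cong)
next
  case (Suc b)
  have "mpow S P (a + Suc b) x y = (\<Sum>u\<in>S. (\<Sum>w\<in>S. mpow S P a x w * mpow S P b w u) * P u y)"
    using Suc.IH by simp
  then show ?case
    by (simp add: sum_product_assoc)
qed

lemma mpow_Suc_0: "x \<in> S \<Longrightarrow> mpow S P (Suc 0) x y = P x y"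
  using finite_S by (simp add: if_distrib[of "\<lambda>c. c * _"] sum.delta cong: if_cong)

lemma pi_mpow: "y \<in> S \<Longrightarrow> (\<Sum>x\<in>S. \<pi> x * mpow S P n x y) = \<pi> y"
proof (induction n arbitrary: y)
  case 0
  then show ?case
    using finite_S by (simp add: if_distrib cong: if_cong)
next
  case (Suc n)
  have "(\<Sum>x\<in>S. \<pi> x * mpow S P (Suc n) x y) = (\<Sum>z\<in>S. (\<Sum>x\<in>S. \<pi> x * mpow S P n x z) * P z y)"
    by (simp add: sum_product_assoc)
  also have "\<dots> = \<pi> y"
    using Suc by (simp add: pi_P)
  finally show ?case .
qed

definition markov_op :: "nat \<Rightarrow> (nat \<Rightarrow> real) \<Rightarrow> nat \<Rightarrow> real" where
  "markov_op n f x = (\<Sum>w\<in>S. mpow S P n x w * f w)"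

definition mean :: "(nat \<Rightarrow> real) \<Rightarrow> real" where
  "mean f = (\<Sum>x\<in>S. \<pi> x * f x)"

lemma markov_op_0: "x \<in> S \<Longrightarrow> markov_op 0 f x = f x"
  unfolding markov_op_def using finite_S by (simp add: if_distrib[of "\<lambda>c. c * _"] sum.delta cong: if_cong)

lemma markov_op_add: "markov_op (a + b) f = markov_op a (markov_op b f)"
proof
  fix x
  have "markov_op (a + b) f x = (\<Sum>y\<in>S. (\<Sum>w\<in>S. mpow S P a x w * mpow S P b w y) * f y)"
    unfolding markov_op_def by (simp add: mpow_add cong: sum.cong)
  also have "\<dots> = markov_op a (markov_op b f) x"
    unfolding markov_op_def by (rule sum_product_assoc)
  finally show "markov_op (a + b) f x = markov_op a (markov_op b f) x" .
qed

lemma markov_op_Suc: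
  assumes "x \<in> S"
  shows "markov_op (Suc n) f x = (\<Sum>w\<in>S. P x w * markov_op n f w)"
proof -
  have "markov_op (Suc n) f x = markov_op (Suc 0) (markov_op n f) x"
    using markov_op_add[of "Suc 0" n f] by simp
  then show ?thesis
    unfolding markov_op_def[of "Suc 0"] by (simp add: mpow_Suc_0[OF assms] del: mpow.simps)
qed

lemma markov_op_uminus: "markov_op n (\<lambda>y. - f y) x = - markov_op n f x"
  unfolding markov_op_def by (simp add: sum_negf)

lemma markov_op_ge:
  assumes "x \<in> S" "\<And>y. y \<in> S \<Longrightarrow> a \<le> f y"
  shows "a \<le> markov_op n f x"
proof -
  have "a = (\<Sum>w\<in>S. mpow S P n x w * a)"
    using mpow_row_sum[OF assms(1)] by (simp add: sum_distrib_right[symmetric])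
  also have "\<dots> \<le> markov_op n f x"
    unfolding markov_op_def by (intro sum_mono mult_left_mono assms(2) mpow_nonneg)
  finally show ?thesis .
qed

lemma markov_op_le: "x \<in> S \<Longrightarrow> (\<And>y. y \<in> S \<Longrightarrow> f y \<le> b) \<Longrightarrow> markov_op n f x \<le> b"
  using markov_op_ge[of x "- b" "\<lambda>y. - f y" n] by (simp add: markov_op_uminus)

lemma mean_markov_op: "mean (markov_op n f) = mean f"
proof -
  have "mean (markov_op n f) = (\<Sum>y\<in>S. (\<Sum>x\<in>S. \<pi> x * mpow S P n x y) * f y)"
    unfolding mean_def markov_op_def by (rule sum_product_assoc[symmetric])
  then show ?thesis
    unfolding mean_def by (simp add: pi_mpow del: mpow.simps)
qed

lemma mean_uminus: "mean (\<lambda>x. - f x) = - mean f"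
  unfolding mean_def by (simp add: sum_negf)

lemma mean_le:
  assumes "\<And>x. x \<in> S \<Longrightarrow> f x \<le> U"
  shows "mean f \<le> U"
proof -
  have "mean f \<le> (\<Sum>x\<in>S. \<pi> x * U)"
    unfolding mean_def by (intro sum_mono mult_left_mono assms pi_nonneg)
  then show ?thesis
    by (simp add: sum_distrib_right[symmetric] pi_sum)
qed

lemma mean_indicator: "B \<subseteq> S \<Longrightarrow> mean (indicator B) = sum \<pi> B"
  unfolding mean_def using finite_S by (rule sum_mult_indicator_subset)

subsection \<open>Oscillation\<close>

definition osc :: "(nat \<Rightarrow> real) \<Rightarrow> real" where
  "osc f = Max (f ` S) - Min (f ` S)"

lemma osc_bounds:
  assumes "z \<in> S"
  shows "Min (f ` S) \<le> f z" and "f z \<le> Min (f ` S) + osc f"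
  using Min_le[of "f ` S" "f z"] Max_ge[of "f ` S" "f z"] assms finite_S
  unfolding osc_def by simp_all

lemma diff_le_osc: "x \<in> S \<Longrightarrow> y \<in> S \<Longrightarrow> f x - f y \<le> osc f"
  using osc_bounds[of x f] osc_bounds[of y f] by linarith

lemma osc_nonneg: "0 \<le> osc f"
proof -
  obtain z where "z \<in> S"
    using S_nonempty by blast
  then show ?thesis
    using diff_le_osc[of z z f] by simp
qed

lemma osc_leI:
  assumes "\<And>x y. x \<in> S \<Longrightarrow> y \<in> S \<Longrightarrow> f x - f y \<le> W"
  shows "osc f \<le> W"
proof -
  have "Max (f ` S) \<in> f ` S" "Min (f ` S) \<in> f ` S"
    using finite_S S_nonempty by (simp_all add: Max_in Min_in)
  then obtain x y where "x \<in> S" "Max (f ` S) = f x" "y \<in> S" "Min (f ` S) = f y"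
    by (metis imageE)
  then show ?thesis
    unfolding osc_def using assms by simp
qed

lemma osc_le_band:
  assumes "\<And>z. z \<in> S \<Longrightarrow> a \<le> f z \<and> f z \<le> a + W"
  shows "osc f \<le> W"
proof (rule osc_leI)
  fix x y assume "x \<in> S" "y \<in> S"
  then show "f x - f y \<le> W"
    using assms[of x] assms[of y] by linarith
qed

lemma osc_indicator_le_1: "osc (indicator B) \<le> 1"
  by (rule osc_le_band[of 0]) (simp add: indicator_def)

lemma mean_le_osc:
  assumes "z \<in> S"
  shows "mean f - f z \<le> osc f"
proof -
  have "mean f \<le> Min (f ` S) + osc f"
    by (rule mean_le) (rule osc_bounds(2))
  then show ?thesis
    using osc_bounds(1)[OF assms, of f] by linarith
qed

lemma osc_markov_op_power:
  assumes contract: "\<And>h. osc (markov_op n h) \<le> q * osc h" and "0 \<le> q"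
  shows "osc (markov_op (k * n) f) \<le> q ^ k * osc f"
proof (induction k)
  case 0
  show ?case
    by (auto intro!: osc_leI simp: markov_op_0 diff_le_osc)
next
  case (Suc k)
  have "osc (markov_op (Suc k * n) f) = osc (markov_op n (markov_op (k * n) f))"
    by (simp add: markov_op_add)
  also have "\<dots> \<le> q * osc (markov_op (k * n) f)"
    by (rule contract)
  also have "\<dots> \<le> q ^ Suc k * osc f"
    using Suc \<open>0 \<le> q\<close> by (simp add: mult.assoc mult_left_mono)
  finally show ?case .
qed

subsection \<open>Total variation and oscillation\<close>

lemma tv_eq_mean_minus_markov_op:
  fixes t :: nat
  assumes x: "x \<in> S"
  defines "B \<equiv> {y\<in>S. mpow S P t x y < \<pi> y}"
  shows "tv S (mpow S P t x) \<pi> = mean (indicator B) - markov_op t (indicator B) x"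
proof -
  have split: "sum g S = sum g B + sum g (S - B)" for g :: "nat \<Rightarrow> real"
    using finite_S sum.subset_diff[of B S g] unfolding B_def by auto
  have "(\<Sum>y\<in>S - B. mpow S P t x y - \<pi> y) = (\<Sum>y\<in>B. \<pi> y - mpow S P t x y)"
    using split[of "\<lambda>y. mpow S P t x y - \<pi> y"] mpow_row_sum[OF x] pi_sum by (simp add: sum_subtractf)
  moreover have "(\<Sum>y\<in>S. \<bar>mpow S P t x y - \<pi> y\<bar>)
      = (\<Sum>y\<in>B. \<pi> y - mpow S P t x y) + (\<Sum>y\<in>S - B. mpow S P t x y - \<pi> y)"
    unfolding split[of "\<lambda>y. \<bar>mpow S P t x y - \<pi> y\<bar>"]
    by (intro arg_cong2[where f="(+)"] sum.cong) (auto simp: B_def)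
  ultimately have "tv S (mpow S P t x) \<pi> = (\<Sum>y\<in>B. \<pi> y - mpow S P t x y)"
    unfolding tv_def by simp
  moreover have "B \<subseteq> S"
    unfolding B_def by auto
  ultimately show ?thesis
    unfolding mean_def markov_op_def sum_mult_indicator_subset[OF finite_S \<open>B \<subseteq> S\<close>]
    by (simp add: sum_subtractf)
qed

lemma dmix_le_osc:
  assumes "\<And>f. (\<And>y. y \<in> S \<Longrightarrow> 0 \<le> f y \<and> f y \<le> 1) \<Longrightarrow> osc (markov_op t f) \<le> D"
  shows "dmix S P \<pi> t \<le> D"
proof -
  have "tv S (mpow S P t x) \<pi> \<le> D" if x: "x \<in> S" for x
  proof -
    define B where "B = {y\<in>S. mpow S P t x y < \<pi> y}"
    have "tv S (mpow S P t x) \<pi> = mean (markov_op t (indicator B)) - markov_op t (indicator B) x"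
      unfolding B_def mean_markov_op by (rule tv_eq_mean_minus_markov_op[OF x])
    also have "\<dots> \<le> osc (markov_op t (indicator B))"
      by (rule mean_le_osc[OF x])
    also have "\<dots> \<le> D"
      by (rule assms) (simp add: indicator_def)
    finally show ?thesis .
  qed
  then show ?thesis
    unfolding dmix_def using finite_S S_nonempty by (subst Max_le_iff) auto
qed

lemma tv_le_dmix: "x \<in> S \<Longrightarrow> tv S (mpow S P t x) \<pi> \<le> dmix S P \<pi> t"
  unfolding dmix_def using finite_S by (auto intro!: Max_ge)

lemma markov_op_diff_le_half_osc:
  assumes d: "dmix S P \<pi> t \<le> 1/4" and x: "x \<in> S" and y: "y \<in> S"
  shows "markov_op t f x - markov_op t f y \<le> osc f / 2"
proof -
  define c where "c = Min (f ` S) + osc f / 2"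
  define d where "d w = mpow S P t x w - mpow S P t y w" for w
  have "sum d S = 0"
    unfolding d_def using mpow_row_sum[OF x] mpow_row_sum[OF y] by (simp add: sum_subtractf)
  then have "markov_op t f x - markov_op t f y = (\<Sum>w\<in>S. d w * (f w - c))"
    unfolding markov_op_def d_def
    by (simp add: sum_subtractf left_diff_distrib right_diff_distrib sum_distrib_right[symmetric])
  also have "\<dots> \<le> (\<Sum>w\<in>S. \<bar>d w\<bar> * (osc f / 2))"
  proof (rule sum_mono)
    fix w assume "w \<in> S"
    then have "\<bar>f w - c\<bar> \<le> osc f / 2"
      using osc_bounds[of w f] unfolding c_def abs_le_iff by (intro conjI) linarith+
    then have "\<bar>d w * (f w - c)\<bar> \<le> \<bar>d w\<bar> * (osc f / 2)"
      unfolding abs_mult by (rule mult_left_mono) simp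
    then show "d w * (f w - c) \<le> \<bar>d w\<bar> * (osc f / 2)"
      by simp
  qed
  also have "\<dots> = (\<Sum>w\<in>S. \<bar>d w\<bar>) * (osc f / 2)"
    by (simp add: sum_distrib_right)
  also have "\<dots> \<le> 1 * (osc f / 2)"
  proof (rule mult_right_mono)
    have "(\<Sum>w\<in>S. \<bar>d w\<bar>) \<le> (\<Sum>w\<in>S. \<bar>mpow S P t x w - \<pi> w\<bar> + \<bar>mpow S P t y w - \<pi> w\<bar>)"
      unfolding d_def by (intro sum_mono) linarith
    also have "\<dots> = 2 * tv S (mpow S P t x) \<pi> + 2 * tv S (mpow S P t y) \<pi>"
      unfolding tv_def by (simp add: sum.distrib)
    finally show "(\<Sum>w\<in>S. \<bar>d w\<bar>) \<le> 1"
      using tv_le_dmix[OF x, of t] tv_le_dmix[OF y, of t] d by linarith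
  qed (simp add: osc_nonneg)
  finally show ?thesis
    by simp
qed

lemma osc_markov_op_half:
  assumes "dmix S P \<pi> t \<le> 1/4"
  shows "osc (markov_op t f) \<le> 1/2 * osc f"
  by (rule osc_leI) (use markov_op_diff_le_half_osc[OF assms] in simp)

lemma dmix_0_gt:
  assumes "a \<in> S" "b \<in> S" "a \<noteq> b"
  shows "1/4 < dmix S P \<pi> 0"
proof (rule ccontr)
  assume "\<not> 1/4 < dmix S P \<pi> 0"
  then have "markov_op 0 (indicator {a}) a - markov_op 0 (indicator {a}) b \<le> osc (indicator {a}) / 2"
    using assms by (intro markov_op_diff_le_half_osc) auto
  then show False
    using assms osc_indicator_le_1[of "{a}"] by (simp add: markov_op_0)
qed

subsection \<open>Survival probabilities\<close>

definition survival :: "(nat \<Rightarrow> nat set) \<Rightarrow> nat \<Rightarrow> nat \<Rightarrow> real" where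
  "survival A x t = (\<Sum>y\<in>S. survive S P A x t y)"

lemma survive_nonneg: "y \<in> S \<Longrightarrow> survive S P A x t y \<ge> 0"
  by (induction t arbitrary: y) (auto intro!: sum_nonneg mult_nonneg_nonneg P_nonneg)

lemma survive_in_target: "y \<in> A t \<Longrightarrow> survive S P A x t y = 0"
  by (cases t) auto

lemma survival_nonneg: "survival A x t \<ge> 0"
  unfolding survival_def by (intro sum_nonneg survive_nonneg)

lemma survival_0_le_1: "survival A x 0 \<le> 1"
proof -
  have "survival A x 0 \<le> (\<Sum>y\<in>S. if y = x then 1 else 0)"
    unfolding survival_def by (intro sum_mono) auto
  then show ?thesis
    using finite_S by (simp split: if_splits)
qed

lemma survive_Suc_le: "y \<in> S \<Longrightarrow> survive S P A x (Suc t) y \<le> (\<Sum>z\<in>S. survive S P A x t z * P z y)"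
  by (auto intro!: sum_nonneg mult_nonneg_nonneg P_nonneg survive_nonneg)

lemma survival_eq_step_sum: "(\<Sum>y\<in>S. \<Sum>z\<in>S. survive S P A x t z * P z y) = survival A x t"
  using sum_product_assoc[where f="survive S P A x t" and g=P and h="\<lambda>_. 1" and I=S and J=S]
  unfolding survival_def by (simp add: P_row_sum)

lemma survival_antimono: "t \<le> t' \<Longrightarrow> survival A x t' \<le> survival A x t"
proof (induction t' rule: dec_induct)
  case (step n)
  have "survival A x (Suc n) \<le> (\<Sum>y\<in>S. \<Sum>z\<in>S. survive S P A x n z * P z y)"
    unfolding survival_def by (intro sum_mono survive_Suc_le)
  with step show ?case
    by (simp add: survival_eq_step_sum)
qed simp

lemma partial_sum_le_exp_hit: "ennreal (\<Sum>t<N. survival A x t) \<le> exp_hit S P A x"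
proof -
  have "(\<Sum>t<N. ennreal (survival A x t)) \<le> (\<Sum>t. ennreal (survival A x t))"
    by (rule sum_le_suminf[OF summableI]) auto
  then show ?thesis
    unfolding exp_hit_def survival_def[symmetric] by (simp add: survival_nonneg)
qed

lemma exp_hit_le:
  assumes "\<And>N. (\<Sum>t<N. survival A x t) \<le> B"
  shows "exp_hit S P A x \<le> ennreal B"
proof -
  have "exp_hit S P A x = (SUP N. ennreal (\<Sum>t<N. survival A x t))"
    unfolding exp_hit_def survival_def[symmetric] suminf_eq_SUP by (simp add: survival_nonneg)
  also have "\<dots> \<le> ennreal B"
    using assms by (intro SUP_least ennreal_leI)
  finally show ?thesis .
qed

lemma survival_le_exp_hit:
  assumes "exp_hit S P A x \<le> ennreal T" and "0 \<le> T"
  shows "(real m + 1) * survival A x m \<le> T"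
proof -
  have "(\<Sum>t<Suc m. survival A x m) \<le> (\<Sum>t<Suc m. survival A x t)"
    by (intro sum_mono survival_antimono) simp
  also have "\<dots> \<le> T"
    using order_trans[OF partial_sum_le_exp_hit assms(1)] ennreal_le_iff[OF assms(2)] by blast
  finally show ?thesis
    by (simp add: add.commute)
qed

lemma survive_le_mpow:
  "y \<in> S \<Longrightarrow> survive S P A x (t + j) y \<le> (\<Sum>z\<in>S. survive S P A x t z * mpow S P j z y)"
proof (induction j arbitrary: y)
  case 0
  then show ?case
    using finite_S by (simp add: if_distrib[of "\<lambda>c. _ * c"] cong: if_cong)
next
  case (Suc j)
  have "survive S P A x (t + Suc j) y \<le> (\<Sum>w\<in>S. survive S P A x (t + j) w * P w y)"
    using survive_Suc_le[OF Suc.prems] by simp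
  also have "\<dots> \<le> (\<Sum>w\<in>S. (\<Sum>z\<in>S. survive S P A x t z * mpow S P j z w) * P w y)"
    using Suc.IH by (intro sum_mono mult_right_mono P_nonneg Suc.prems) auto
  also have "\<dots> = (\<Sum>z\<in>S. survive S P A x t z * mpow S P (Suc j) z y)"
    by (simp add: sum_product_assoc)
  finally show ?case .
qed

lemma survival_block_decay:
  assumes "A (t + n) \<subseteq> S"
    and hit: "\<And>z. z \<in> S \<Longrightarrow> q \<le> (\<Sum>y\<in>A (t + n). mpow S P n z y)"
  shows "survival A x (t + n) \<le> (1 - q) * survival A x t"
proof -
  define B where "B = A (t + n)"
  have "survival A x (t + n) = (\<Sum>y\<in>S - B. survive S P A x (t + n) y)"
    unfolding survival_def B_def using finite_S
    by (intro sum.mono_neutral_right) (auto simp: survive_in_target)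
  also have "\<dots> \<le> (\<Sum>y\<in>S - B. \<Sum>z\<in>S. survive S P A x t z * mpow S P n z y)"
    by (intro sum_mono survive_le_mpow) simp
  also have "\<dots> = (\<Sum>z\<in>S. survive S P A x t z * (\<Sum>y\<in>S - B. mpow S P n z y))"
    using sum_product_assoc[where f="survive S P A x t" and g="mpow S P n" and h="\<lambda>_. 1" and I=S and J="S - B"]
    by simp
  also have "\<dots> \<le> (\<Sum>z\<in>S. survive S P A x t z * (1 - q))"
  proof (intro sum_mono mult_left_mono survive_nonneg)
    fix z assume z: "z \<in> S"
    show "(\<Sum>y\<in>S - B. mpow S P n z y) \<le> 1 - q"
      using hit[OF z] mpow_row_sum[OF z] assms(1) finite_S unfolding B_def
      by (simp add: sum_diff)
  qed
  finally show ?thesis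
    unfolding survival_def by (simp add: sum_distrib_left mult.commute)
qed

lemma survival_sum_le_geometric:
  assumes "0 \<le> q" "q < 1" "1 \<le> n"
    and decay: "\<And>t. survival A x (t + n) \<le> q * survival A x t"
  shows "(\<Sum>t<N. survival A x t) \<le> n / (1 - q)"
proof -
  have geo: "survival A x (i * n) \<le> q ^ i" for i
  proof (induction i)
    case (Suc i)
    have "survival A x (Suc i * n) \<le> q * survival A x (i * n)"
      using decay[of "i * n"] by (simp add: add.commute)
    also have "\<dots> \<le> q ^ Suc i"
      using Suc \<open>0 \<le> q\<close> by (simp add: mult_left_mono)
    finally show ?case .
  qed (simp add: survival_0_le_1)
  have "(\<Sum>t<N. survival A x t) \<le> (\<Sum>t<N * n. survival A x t)"
    using \<open>1 \<le> n\<close> by (intro sum_mono2) (auto simp: survival_nonneg)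
  also have "\<dots> = (\<Sum>K<N. \<Sum>t\<in>{K * n..<K * n + n}. survival A x t)"
    by (rule sum.nat_group[symmetric])
  also have "\<dots> \<le> (\<Sum>K<N. n * q ^ K)"
  proof (rule sum_mono)
    fix K
    have "(\<Sum>t\<in>{K * n..<K * n + n}. survival A x t) \<le> (\<Sum>t\<in>{K * n..<K * n + n}. q ^ K)"
      using geo[of K] by (intro sum_mono) (auto intro: order_trans[OF survival_antimono])
    then show "(\<Sum>t\<in>{K * n..<K * n + n}. survival A x t) \<le> n * q ^ K"
      by simp
  qed
  also have "\<dots> = n * ((1 - q ^ N) / (1 - q))"
    using \<open>q < 1\<close> by (simp add: sum_distrib_left[symmetric] sum_gp_strict)
  also have "\<dots> \<le> n / (1 - q)"
    using assms by (simp add: divide_right_mono mult_left_le)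
  finally show ?thesis .
qed

subsection \<open>Moving targets from space-time harmonic functions\<close>

lemma harmonic_survival_lower_bound:
  assumes y: "y \<in> S"
    and harmonic: "\<And>r z. r < m \<Longrightarrow> z \<in> S \<Longrightarrow> g r z = (\<Sum>w\<in>S. P z w * g (Suc r) w)"
    and target: "\<And>r z. r \<le> m \<Longrightarrow> z \<in> S \<Longrightarrow> z \<in> A r \<Longrightarrow> c \<le> g r z"
    and "j \<le> m"
  shows "c * (1 - survival A y j) + (\<Sum>z\<in>S. survive S P A y j z * g j z) \<le> g 0 y"
  using \<open>j \<le> m\<close>
proof (induction j)
  case 0
  show ?case
  proof (cases "y \<in> A 0")
    case True
    then have "survive S P A y 0 z = 0" for z
      by simp
    then show ?thesis
      using target[of 0 y] y True by (simp add: survival_def)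
  next
    case False
    then have "survive S P A y 0 z = (if z = y then 1 else 0)" for z
      by simp
    then show ?thesis
      using y finite_S by (simp add: survival_def if_distrib[of "\<lambda>c. c * _"] cong: if_cong)
  qed
next
  case (Suc j)
  define Q where "Q w = (\<Sum>z\<in>S. survive S P A y j z * P z w)" for w
  have "c * (survival A y j - survival A y (Suc j)) + (\<Sum>w\<in>S. survive S P A y (Suc j) w * g (Suc j) w)
      = (\<Sum>w\<in>S. c * (Q w - survive S P A y (Suc j) w) + survive S P A y (Suc j) w * g (Suc j) w)"
  proof -
    have "sum Q S = survival A y j"
      unfolding Q_def by (rule survival_eq_step_sum)
    then show ?thesis
      unfolding survival_def[of A y "Suc j"]
      by (simp add: sum.distrib sum_subtractf right_diff_distrib flip: sum_distrib_left del: survive.simps)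
  qed
  also have "\<dots> \<le> (\<Sum>w\<in>S. Q w * g (Suc j) w)"
  proof (rule sum_mono)
    fix w assume w: "w \<in> S"
    show "c * (Q w - survive S P A y (Suc j) w) + survive S P A y (Suc j) w * g (Suc j) w
        \<le> Q w * g (Suc j) w"
    proof (cases "w \<in> A (Suc j)")
      case True
      have "0 \<le> Q w"
        unfolding Q_def using w by (auto intro!: sum_nonneg mult_nonneg_nonneg P_nonneg survive_nonneg)
      moreover have "c \<le> g (Suc j) w"
        using target[of "Suc j" w] Suc.prems w True by simp
      ultimately have "c * Q w \<le> Q w * g (Suc j) w"
        by (metis mult.commute mult_left_mono)
      then show ?thesis
        using True by simp
    next
      case False
      then show ?thesis
        by (simp add: Q_def)
    qed
  qed
  also have "\<dots> = (\<Sum>z\<in>S. survive S P A y j z * g j z)"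
    using harmonic[of j] Suc.prems unfolding Q_def
    by (simp add: sum_product_assoc)
  finally show ?case
    using Suc by (simp add: algebra_simps)
qed

lemma harmonic_hitting_lower_bound:
  assumes y: "y \<in> S"
    and harmonic: "\<And>r z. r < m \<Longrightarrow> z \<in> S \<Longrightarrow> g r z = (\<Sum>w\<in>S. P z w * g (Suc r) w)"
    and target: "\<And>r z. r \<le> m \<Longrightarrow> z \<in> S \<Longrightarrow> z \<in> A r \<Longrightarrow> c \<le> g r z"
    and final: "\<And>z. z \<in> S \<Longrightarrow> a \<le> g m z"
  shows "c - survival A y m * (c - a) \<le> g 0 y"
proof -
  have "a * survive S P A y m z \<le> survive S P A y m z * g m z" if "z \<in> S" for z
    using mult_right_mono[OF final[OF that] survive_nonneg[OF that]] by (simp add: mult.commute)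
  then have "a * survival A y m \<le> (\<Sum>z\<in>S. survive S P A y m z * g m z)"
    unfolding survival_def sum_distrib_left by (rule sum_mono)
  moreover have "c * (1 - survival A y m) + (\<Sum>z\<in>S. survive S P A y m z * g m z) \<le> g 0 y"
    using harmonic_survival_lower_bound[where g=g and A=A and c=c and m=m and j=m, OF y harmonic target]
    by simp
  moreover have "c * (1 - survival A y m) + a * survival A y m = c - survival A y m * (c - a)"
    by (simp add: algebra_simps)
  ultimately show ?thesis
    by linarith
qed

lemma mass_superlevel_ge:
  assumes "0 < \<alpha>" "\<alpha> < 1" and f_le: "\<And>z. z \<in> S \<Longrightarrow> f z \<le> U"
  shows "\<alpha> \<le> sum \<pi> {z\<in>S. mean f - \<alpha> / (1 - \<alpha>) * (U - mean f) \<le> f z}"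
proof -
  define c where "c = mean f - \<alpha> / (1 - \<alpha>) * (U - mean f)"
  define L where "L = {z\<in>S. f z < c}"
  have L: "L \<subseteq> S" "finite L"
    unfolding L_def using finite_S by auto
  have U_c: "U - c = (U - mean f) / (1 - \<alpha>)"
    unfolding c_def using \<open>\<alpha> < 1\<close> by (simp add: field_simps)
  have "mean f \<le> U"
    by (rule mean_le) (rule f_le)
  have "sum \<pi> L < 1 - \<alpha>" if nonzero: "sum \<pi> L \<noteq> 0"
  proof -
    obtain z where z: "z \<in> L" "\<pi> z \<noteq> 0"
      using nonzero by (rule sum.not_neutral_contains_not_neutral)
    have "sum \<pi> L * (U - c) = (\<Sum>x\<in>L. \<pi> x * (U - c))"
      by (simp add: sum_distrib_right)
    also have "\<dots> < (\<Sum>x\<in>L. \<pi> x * (U - f x))"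
    proof (rule sum_strict_mono_ex1[OF L(2)])
      show "\<forall>x\<in>L. \<pi> x * (U - c) \<le> \<pi> x * (U - f x)"
        using L(1) by (auto simp: L_def intro!: mult_left_mono pi_nonneg)
      have "\<pi> z * (U - c) < \<pi> z * (U - f z)"
        using z L(1) pi_nonneg[of z] by (intro mult_strict_left_mono) (auto simp: L_def)
      then show "\<exists>x\<in>L. \<pi> x * (U - c) < \<pi> x * (U - f x)"
        using z(1) by blast
    qed
    also have "\<dots> \<le> (\<Sum>x\<in>S. \<pi> x * (U - f x))"
      using L finite_S f_le by (intro sum_mono2) (auto intro!: mult_nonneg_nonneg pi_nonneg)
    also have "\<dots> = 1 * (U - mean f)"
      unfolding mean_def by (simp add: right_diff_distrib sum_subtractf pi_sum flip: sum_distrib_right)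
    finally have "sum \<pi> L / (1 - \<alpha>) * (U - mean f) < 1 * (U - mean f)"
      unfolding U_c by simp
    then have "sum \<pi> L / (1 - \<alpha>) < 1"
      using \<open>mean f \<le> U\<close> by (simp add: mult_right_less_imp_less)
    then show ?thesis
      using \<open>\<alpha> < 1\<close> by simp
  qed
  moreover have "sum \<pi> {z\<in>S. c \<le> f z} = 1 - sum \<pi> L"
  proof -
    have "{z\<in>S. c \<le> f z} = S - L"
      unfolding L_def by auto
    then show ?thesis
      using L finite_S pi_sum by (simp add: sum_diff)
  qed
  ultimately show ?thesis
    unfolding c_def[symmetric] using \<open>\<alpha> < 1\<close> by (cases "sum \<pi> L = 0") auto
qed

lemma superlevel_targets:
  assumes "0 < \<alpha>" "\<alpha> < 1"
    and g_le: "\<And>r z. r \<le> m \<Longrightarrow> z \<in> S \<Longrightarrow> g r z \<le> U"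
    and g_mean: "\<And>r. r \<le> m \<Longrightarrow> mean (g r) = \<mu>"
  shows "(\<lambda>r. if r \<le> m then {z\<in>S. \<mu> - \<alpha> / (1 - \<alpha>) * (U - \<mu>) \<le> g r z} else S) \<in> targets S \<pi> \<alpha>"
  unfolding targets_def
proof (safe)
  fix r
  show "\<alpha> \<le> sum \<pi> (if r \<le> m then {z\<in>S. \<mu> - \<alpha> / (1 - \<alpha>) * (U - \<mu>) \<le> g r z} else S)"
  proof (cases "r \<le> m")
    case True
    then show ?thesis
      using mass_superlevel_ge[OF assms(1,2), of "g r" U] g_le g_mean by simp
  qed (use pi_sum \<open>\<alpha> < 1\<close> in simp)
qed (auto split: if_splits)

lemma markov_op_window_lower_bound:
  assumes "0 < \<alpha>" "\<alpha> < 1"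
    and hit: "\<And>x A. x \<in> S \<Longrightarrow> A \<in> targets S \<pi> \<alpha> \<Longrightarrow> exp_hit S P A x \<le> ennreal T"
    and "0 \<le> T" "T \<le> p * (real m + 1)"
    and band: "\<And>z. z \<in> S \<Longrightarrow> a \<le> h z \<and> h z \<le> a + W"
    and y: "y \<in> S"
  shows "mean h - \<alpha> / (1 - \<alpha>) * (a + W - mean h) - p * W \<le> markov_op m h y"
proof -
  define g where "g r = markov_op (m - r) h" for r
  define c where "c = mean h - \<alpha> / (1 - \<alpha>) * (a + W - mean h)"
  define A where "A r = (if r \<le> m then {z\<in>S. c \<le> g r z} else S)" for r
    \<comment> \<open>only the first m steps matter; afterwards S serves as a target of full mass\<close>
  have g_band: "a \<le> g r z \<and> g r z \<le> a + W" if "z \<in> S" for r z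
    unfolding g_def using that band by (simp add: markov_op_ge markov_op_le)
  have A_target: "A \<in> targets S \<pi> \<alpha>"
    unfolding A_def c_def g_def using assms(1,2) g_band[unfolded g_def]
    by (intro superlevel_targets) (simp_all add: mean_markov_op)
  have "(real m + 1) * survival A y m \<le> p * (real m + 1)"
    using survival_le_exp_hit[OF hit[OF y A_target] \<open>0 \<le> T\<close>] \<open>T \<le> p * (real m + 1)\<close>
    by (rule order_trans)
  then have s_le: "survival A y m \<le> p"
    by (simp add: mult.commute)
  have "c - survival A y m * (c - a) \<le> g 0 y"
  proof (rule harmonic_hitting_lower_bound[OF y])
    show "g r z = (\<Sum>w\<in>S. P z w * g (Suc r) w)" if "r < m" "z \<in> S" for r z
      using markov_op_Suc[OF that(2), of "m - Suc r" h] that(1) unfolding g_def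
      by (simp add: Suc_diff_Suc)
  qed (simp_all add: A_def g_band)
  moreover have "survival A y m * (c - a) \<le> p * W"
  proof -
    obtain z where "z \<in> S"
      using S_nonempty by blast
    then have "0 \<le> W"
      using band[of z] by linarith
    have "mean h \<le> a + W"
      by (rule mean_le) (simp add: band)
    moreover have "0 \<le> \<alpha> / (1 - \<alpha>) * (a + W - mean h)"
      using assms(1,2) \<open>mean h \<le> a + W\<close> by simp
    ultimately have "c - a \<le> W"
      unfolding c_def by linarith
    then have "survival A y m * (c - a) \<le> survival A y m * W"
      by (simp add: mult_left_mono survival_nonneg)
    also have "\<dots> \<le> p * W"
      using s_le \<open>0 \<le> W\<close> by (simp add: mult_right_mono)
    finally show ?thesis .
  qed
  ultimately have "c - p * W \<le> g 0 y"
    by linarith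
  then show ?thesis
    unfolding c_def g_def by simp
qed

lemma osc_markov_op_window:
  assumes "0 < \<alpha>" "\<alpha> < 1"
    and hit: "\<And>x A. x \<in> S \<Longrightarrow> A \<in> targets S \<pi> \<alpha> \<Longrightarrow> exp_hit S P A x \<le> ennreal T"
    and "0 \<le> T" "T \<le> p * (real m + 1)"
  shows "osc (markov_op m h) \<le> (\<alpha> / (1 - \<alpha>) + 2 * p) * osc h"
proof (rule osc_leI)
  fix x y assume "x \<in> S" "y \<in> S"
  define a where "a = Min (h ` S)"
  define \<beta> where "\<beta> = \<alpha> / (1 - \<alpha>)"
  have band: "a \<le> h z \<and> h z \<le> a + osc h" if "z \<in> S" for z
    unfolding a_def using osc_bounds[OF that] by simp
  have band_uminus: "- (a + osc h) \<le> - h z \<and> - h z \<le> - (a + osc h) + osc h" if "z \<in> S" for z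
    using band[OF that] by simp
  have "mean h - \<beta> * (a + osc h - mean h) - p * osc h \<le> markov_op m h y"
    unfolding \<beta>_def using markov_op_window_lower_bound[OF assms band \<open>y \<in> S\<close>] .
  moreover have "- mean h - \<beta> * (mean h - a) - p * osc h \<le> - markov_op m h x"
    using markov_op_window_lower_bound[OF assms band_uminus \<open>x \<in> S\<close>]
    unfolding \<beta>_def mean_uminus markov_op_uminus by simp
  ultimately show "markov_op m h x - markov_op m h y \<le> (\<alpha> / (1 - \<alpha>) + 2 * p) * osc h"
    unfolding \<beta>_def[symmetric] ring_distribs by linarith
qed

subsection \<open>Comparing the two times\<close>

lemma exp_hit_le_tmov: "x \<in> S \<Longrightarrow> A \<in> targets S \<pi> \<alpha> \<Longrightarrow> exp_hit S P A x \<le> tmov S P \<pi> \<alpha>"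
  unfolding tmov_def by (meson SUP_upper2 order_refl)

lemma tmov_le: "(\<And>x A. x \<in> S \<Longrightarrow> A \<in> targets S \<pi> \<alpha> \<Longrightarrow> exp_hit S P A x \<le> B) \<Longrightarrow> tmov S P \<pi> \<alpha> \<le> B"
  unfolding tmov_def by (intro SUP_least)

lemma singleton_dmix_0: "S = {s} \<Longrightarrow> dmix S P \<pi> 0 = 0"
  using pi_sum unfolding dmix_def tv_def by simp

lemma singleton_tmov:
  assumes "S = {s}" "0 < \<alpha>"
  shows "tmov S P \<pi> \<alpha> = 0"
proof -
  have "exp_hit S P A x = 0" if "A \<in> targets S \<pi> \<alpha>" for A x
  proof -
    have "s \<in> A t" for t
    proof -
      have "A t \<subseteq> {s}" "\<alpha> \<le> sum \<pi> (A t)"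
        using that assms(1) unfolding targets_def by auto
      then show ?thesis
        using assms(2) by (cases "A t = {}") (auto dest: subset_singletonD)
    qed
    then have "survival A x t = 0" for t
      unfolding survival_def using assms(1) survive_in_target[of s A t x] by simp
    then show ?thesis
      unfolding exp_hit_def survival_def[symmetric] by simp
  qed
  then show ?thesis
    using tmov_le[of \<alpha> 0] by simp
qed

lemma tmov_ge_1:
  assumes "a \<in> S" "b \<in> S" "a \<noteq> b" and "\<alpha> \<le> 1/2"
  shows "1 \<le> tmov S P \<pi> \<alpha>"
proof -
  have "\<pi> a + \<pi> b \<le> sum \<pi> S"
    using assms finite_S pi_nonneg sum_mono2[of S "{a, b}" \<pi>] by simp
  then obtain x where x: "x \<in> S" "\<pi> x \<le> 1/2"
    using assms(1,2) pi_sum by (cases "\<pi> a \<le> 1/2") auto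
  define A where "A = (\<lambda>_::nat. S - {x})"
  have "A \<in> targets S \<pi> \<alpha>"
    unfolding targets_def A_def using x finite_S pi_sum assms(4) by (simp add: sum_diff1)
  moreover have "survival A x 0 = 1"
    unfolding survival_def A_def using x(1) finite_S by (simp add: if_distrib cong: if_cong)
  then have "1 \<le> exp_hit S P A x"
    using partial_sum_le_exp_hit[where N=1 and A=A and x=x] by simp
  ultimately show ?thesis
    using exp_hit_le_tmov[OF x(1)] order_trans by blast
qed

lemma exp_hit_le_of_mixing:
  assumes mix: "dmix S P \<pi> t \<le> 1/4" "1 \<le> t" and j: "1 / 2 ^ j \<le> \<alpha> / 2" "1 \<le> j"
    and "0 < \<alpha>" "\<alpha> \<le> 1" and "y \<in> S" and A: "A \<in> targets S \<pi> \<alpha>"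
  shows "exp_hit S P A y \<le> ennreal (real (j * t) / (\<alpha> / 2))"
proof (rule exp_hit_le)
  define n where "n = j * t"
  have A_sub: "A s \<subseteq> S" and A_mass: "\<alpha> \<le> sum \<pi> (A s)" for s
    using A unfolding targets_def by auto
  have decay: "survival A y (s + n) \<le> (1 - \<alpha> / 2) * survival A y s" for s
  proof (rule survival_block_decay[OF A_sub])
    fix z assume z: "z \<in> S"
    let ?f = "indicator (A (s + n)) :: nat \<Rightarrow> real"
    have "osc (markov_op n ?f) \<le> (1/2) ^ j * osc ?f"
      unfolding n_def by (intro osc_markov_op_power osc_markov_op_half mix) simp
    also have "\<dots> \<le> 1 / 2 ^ j"
      using osc_indicator_le_1[of "A (s + n)"] by (simp add: power_one_over divide_right_mono)
    finally have "osc (markov_op n ?f) \<le> \<alpha> / 2"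
      using j by linarith
    moreover have "mean (markov_op n ?f) = sum \<pi> (A (s + n))"
      by (simp add: mean_markov_op mean_indicator[OF A_sub])
    moreover have "markov_op n ?f z = (\<Sum>w\<in>A (s + n). mpow S P n z w)"
      unfolding markov_op_def using finite_S A_sub by (rule sum_mult_indicator_subset)
    ultimately show "\<alpha> / 2 \<le> (\<Sum>w\<in>A (s + n). mpow S P n z w)"
      using mean_le_osc[OF z, of "markov_op n ?f"] A_mass[of "s + n"] by linarith
  qed
  have "1 \<le> n"
    unfolding n_def using mix(2) j(2) by simp
  fix N
  show "(\<Sum>s<N. survival A y s) \<le> real (j * t) / (\<alpha> / 2)"
    using survival_sum_le_geometric[OF _ _ \<open>1 \<le> n\<close> decay] \<open>0 < \<alpha>\<close> \<open>\<alpha> \<le> 1\<close>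
    unfolding n_def by simp
qed

lemma tmov_le_tmix:
  assumes "0 < \<alpha>" "\<alpha> \<le> 1" and j: "1 / 2 ^ j \<le> \<alpha> / 2"
  shows "ennreal (\<alpha> / (2 * real j)) * tmov S P \<pi> \<alpha> \<le> tmix S P \<pi> (1/4)"
proof (cases "\<exists>t. dmix S P \<pi> t \<le> 1/4")
  case False
  then show ?thesis
    unfolding tmix_def by simp
next
  case True
  define t where "t = (LEAST t. dmix S P \<pi> t \<le> 1/4)"
  have mix: "dmix S P \<pi> t \<le> 1/4"
    unfolding t_def using True by (rule LeastI_ex)
  have tmix: "tmix S P \<pi> (1/4) = ennreal (real t)"
    unfolding tmix_def t_def using True by (simp add: ennreal_of_nat_eq_real_of_nat)
  have "1 \<le> j"
    using j \<open>\<alpha> \<le> 1\<close> by (cases j) auto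
  show ?thesis
  proof (cases "t = 0")
    case True
    obtain s where "s \<in> S"
      using S_nonempty by blast
    moreover have "z = s" if "z \<in> S" for z
      using dmix_0_gt[OF that \<open>s \<in> S\<close>] mix True by (cases "z = s") auto
    ultimately have "S = {s}"
      by blast
    then show ?thesis
      using singleton_tmov \<open>0 < \<alpha>\<close> by simp
  next
    case False
    have "tmov S P \<pi> \<alpha> \<le> ennreal (real (j * t) / (\<alpha> / 2))"
      using False \<open>1 \<le> j\<close> assms by (intro tmov_le exp_hit_le_of_mixing[OF mix]) auto
    then have "ennreal (\<alpha> / (2 * real j)) * tmov S P \<pi> \<alpha> \<le> ennreal (\<alpha> / (2 * real j)) * ennreal (real (j * t) / (\<alpha> / 2))"
      by (rule mult_left_mono) simp
    also have "\<dots> = ennreal (\<alpha> / (2 * real j) * (real (j * t) / (\<alpha> / 2)))"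
      by (rule ennreal_mult[symmetric]) (use \<open>0 < \<alpha>\<close> in simp_all)
    also have "\<alpha> / (2 * real j) * (real (j * t) / (\<alpha> / 2)) = real t"
      using \<open>0 < \<alpha>\<close> \<open>1 \<le> j\<close> by (simp add: field_simps)
    finally show ?thesis
      unfolding tmix .
  qed
qed

lemma dmix_le_of_contraction:
  assumes "\<And>h. osc (markov_op n h) \<le> q * osc h" "0 \<le> q"
  shows "dmix S P \<pi> (k * n) \<le> q ^ k"
proof (rule dmix_le_osc)
  fix f :: "nat \<Rightarrow> real"
  assume "\<And>y. y \<in> S \<Longrightarrow> 0 \<le> f y \<and> f y \<le> 1"
  then have "osc f \<le> 1"
    using osc_le_band[of 0 f 1] by simp
  then have "q ^ k * osc f \<le> q ^ k"
    using \<open>0 \<le> q\<close> by (simp add: mult_left_le)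
  then show "osc (markov_op (k * n) f) \<le> q ^ k"
    using osc_markov_op_power[OF assms, of k f] by linarith
qed

lemma tmix_le_of_exp_hit_bound:
  assumes "0 < \<alpha>" "\<alpha> < 1" "0 < p" "1 \<le> T" and k: "(\<alpha> / (1 - \<alpha>) + 2 * p) ^ k \<le> 1/4"
    and hit: "\<And>x A. x \<in> S \<Longrightarrow> A \<in> targets S \<pi> \<alpha> \<Longrightarrow> exp_hit S P A x \<le> ennreal T"
  shows "tmix S P \<pi> (1/4) \<le> ennreal (real k * (1 / p + 1) * T)"
proof -
  define m where "m = nat \<lceil>T / p\<rceil>"
  have "0 \<le> T / p"
    using \<open>1 \<le> T\<close> \<open>0 < p\<close> by simp
  then have m: "T / p \<le> real m" "real m \<le> T / p + 1"
    unfolding m_def using ceiling_correct[of "T / p"] by linarith+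
  have "T \<le> p * (real m + 1)"
    using m \<open>0 < p\<close> by (simp add: field_simps)
  then have "osc (markov_op m h) \<le> (\<alpha> / (1 - \<alpha>) + 2 * p) * osc h" for h
    using \<open>1 \<le> T\<close> by (intro osc_markov_op_window[OF \<open>0 < \<alpha>\<close> \<open>\<alpha> < 1\<close> hit]) simp_all
  then have "dmix S P \<pi> (k * m) \<le> (\<alpha> / (1 - \<alpha>) + 2 * p) ^ k"
    by (rule dmix_le_of_contraction) (use assms in simp)
  then have "dmix S P \<pi> (k * m) \<le> 1/4"
    using k by linarith
  then have "tmix S P \<pi> (1/4) \<le> of_nat (k * m)"
    by (rule tmix_le_of_nat)
  also have "\<dots> = ennreal (real k * real m)"
    by (simp add: ennreal_of_nat_eq_real_of_nat)
  also have "\<dots> \<le> ennreal (real k * (1 / p + 1) * T)"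
  proof (rule ennreal_leI)
    have "real m \<le> (1 / p + 1) * T"
      using m \<open>1 \<le> T\<close> by (simp add: field_simps)
    then show "real k * real m \<le> real k * (1 / p + 1) * T"
      by (simp add: mult.assoc mult_left_mono)
  qed
  finally show ?thesis .
qed

lemma tmix_le_tmov:
  assumes "0 < \<alpha>" "\<alpha> \<le> 1/2" "0 < p" and k: "(\<alpha> / (1 - \<alpha>) + 2 * p) ^ k \<le> 1/4"
  shows "tmix S P \<pi> (1/4) \<le> ennreal (real k * (1 / p + 1)) * tmov S P \<pi> \<alpha>"
proof (cases "\<exists>s. S = {s}")
  case True
  then have "tmix S P \<pi> (1/4) \<le> 0"
    using singleton_dmix_0 tmix_le_of_nat[of S P \<pi> 0 "1/4"] by auto
  then show ?thesis
    by simp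
next
  case False
  then obtain a b where "a \<in> S" "b \<in> S" "a \<noteq> b"
    using S_nonempty by blast
  then have "1 \<le> tmov S P \<pi> \<alpha>"
    using tmov_ge_1 \<open>\<alpha> \<le> 1/2\<close> by blast
  show ?thesis
  proof (cases "tmov S P \<pi> \<alpha>")
    case top
    have "k \<noteq> 0"
      using k by (intro notI) simp
    then show ?thesis
      using top \<open>0 < p\<close> add_pos_pos[of "1 / p" 1] by (simp add: ennreal_mult_top)
  next
    case (real T)
    have hit: "exp_hit S P A x \<le> ennreal T" if "x \<in> S" "A \<in> targets S \<pi> \<alpha>" for x A
      using exp_hit_le_tmov[OF that] real by simp
    have "1 \<le> T"
      using real \<open>1 \<le> tmov S P \<pi> \<alpha>\<close> by simp
    then have "tmix S P \<pi> (1/4) \<le> ennreal (real k * (1 / p + 1) * T)"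
      using tmix_le_of_exp_hit_bound[OF \<open>0 < \<alpha>\<close> _ \<open>0 < p\<close> _ k hit] \<open>\<alpha> \<le> 1/2\<close> by simp
    also have "\<dots> = ennreal (real k * (1 / p + 1)) * tmov S P \<pi> \<alpha>"
      using real \<open>0 < p\<close> by (simp add: ennreal_mult)
    finally show ?thesis .
  qed
qed

end

theorem theorem1p1:
  fixes \<alpha> :: real
  assumes "0 < \<alpha>" and "\<alpha> < 1/2"
  shows "\<exists>c C :: real. c > 0 \<and> C > 0 \<and>
    (\<forall>S P \<pi>. finite S \<and> S \<noteq> {} \<and> stochastic S P \<and> irreducible_chain S P \<and> stationary S P \<pi> \<longrightarrow>
       ennreal c * tmov S P \<pi> \<alpha> \<le> tmix S P \<pi> (1/4) \<and>
       tmix S P \<pi> (1/4) \<le> ennreal C * tmov S P \<pi> \<alpha>)"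
proof -
  define \<beta> where "\<beta> = \<alpha> / (1 - \<alpha>)"
  define p where "p = (1 - \<beta>) / 4"
  have "\<beta> < 1"
    unfolding \<beta>_def using assms by (simp add: field_simps)
  then have "0 < p" and "\<beta> + 2 * p < 1"
    unfolding p_def by (auto simp: field_simps)
  then obtain k where k: "(\<beta> + 2 * p) ^ k < 1/4"
    using real_arch_pow_inv[of "1/4"] by auto
  obtain j where j: "(1/2) ^ j < \<alpha> / 2"
    using real_arch_pow_inv[of "\<alpha> / 2" "1/2"] assms by auto
  have "k \<noteq> 0"
    using k by (cases k) auto
  have "j \<noteq> 0"
    using j assms by (cases j) auto
  show ?thesis
  proof (intro exI conjI allI impI)
    show "0 < \<alpha> / (2 * real j)" "0 < real k * (1 / p + 1)"
      using assms \<open>0 < p\<close> \<open>k \<noteq> 0\<close> \<open>j \<noteq> 0\<close> by (simp_all add: add_pos_pos)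
    fix S P \<pi>
    assume "finite S \<and> S \<noteq> {} \<and> stochastic S P \<and> irreducible_chain S P \<and> stationary S P \<pi>"
    then interpret finite_markov_chain S P \<pi>
      by unfold_locales auto
    show "ennreal (\<alpha> / (2 * real j)) * tmov S P \<pi> \<alpha> \<le> tmix S P \<pi> (1/4)"
      using tmov_le_tmix assms j by (simp add: power_one_over)
    show "tmix S P \<pi> (1/4) \<le> ennreal (real k * (1 / p + 1)) * tmov S P \<pi> \<alpha>"
      using tmix_le_tmov assms \<open>0 < p\<close> k unfolding \<beta>_def by simp
  qed
qed

end
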